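(* Every infinite sequence $(w_n)_{n\in\mathbb N}$ of words over a finite alphabet $A$ admits a subsequence that is $(\vec u,\vec B)$-adequate for some factorization pattern $(\vec u,\vec B)$.
   Context: For $B\subseteq A$, $B^{\circledast}$ is the set of words over $B$ in which every symbol of $B$ occurs. A factorization pattern is $(\vec u,\vec B)$ with $\vec u=(u_0,\dots,u_p)\in(A^* )^{p+1}$, $\vec B=(B_1,\dots,B_p)$ nonempty subsets of $A$, $p\ge0$. $L(\vec u,\vec B,n)=u_0(B_1^{\circledast})^nu_1\cdots(B_p^{\circledast})^nu_p$. A sequence $(w_n)_n$ is $(\vec u,\vec B)$-adequate if $w_n\in L(\vec u,\vec B,n)$ for every $n$. *)

theory Defs
  imports Main
begin

definition full_words :: "'a set \<Rightarrow> 'a list set" where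
  "full_words B = {w. set w \<subseteq> B \<and> B \<subseteq> set w}"

definition lang_pow :: "'a list set \<Rightarrow> nat \<Rightarrow> 'a list set" where
  "lang_pow L n = {concat ws | ws. length ws = n \<and> set ws \<subseteq> L}"

text \<open>L(u,B,n) = u0 (B1^full)^n u1 ... (Bp^full)^n up, with u = [u0,...,up], B = [B1,...,Bp].\<close>
fun fact_lang :: "'a list list \<Rightarrow> 'a set list \<Rightarrow> nat \<Rightarrow> 'a list set" where
  "fact_lang [u] [] n = {u}"
| "fact_lang (u # us) (B # Bs) n =
     {u @ x @ y | x y. x \<in> lang_pow (full_words B) n \<and> y \<in> fact_lang us Bs n}"
| "fact_lang _ _ n = {}"

definition fact_pattern :: "'a set \<Rightarrow> 'a list list \<Rightarrow> 'a set list \<Rightarrow> bool" where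
  "fact_pattern A us Bs \<longleftrightarrow> length us = length Bs + 1 \<and> (\<forall>u\<in>set us. set u \<subseteq> A)
     \<and> (\<forall>B\<in>set Bs. B \<noteq> {} \<and> B \<subseteq> A)"

definition adequate :: "'a list list \<Rightarrow> 'a set list \<Rightarrow> (nat \<Rightarrow> 'a list) \<Rightarrow> bool" where
  "adequate us Bs w \<longleftrightarrow> (\<forall>n. w n \<in> fact_lang us Bs n)"

end

theory Submission
  imports Defs "HOL-Library.Infinite_Set"
begin

(* The proof is by well-founded induction on the (finite) set C of letters used by the
   sequence.  If for every k infinitely many terms lie in (C^full)^(k+1), a diagonal
   subsequence w_(s n) in (C^full)^(n+1) fits the one-block pattern ([],[]),(C).
   Otherwise, for some k infinitely many terms avoid (C^full)^(k+1); restricting to them,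
   we argue by induction on k.  Terms missing a letter of C live over a smaller alphabet
   (outer induction).  A term containing all of C and avoiding (C^full)^(k+2) splits as
   p c r, where p c is its shortest prefix containing all of C: then p uses only
   C - {c} (outer induction) and r avoids (C^full)^(k+1) (inner induction).  Patterns
   for the p's and r's are glued around the letter c, made constant by pigeonhole.

   During the construction adequacy is used with exponents shifted by one
   (w n in L(u,B,n+1)), which is stable under passing to subsequences because
   L(u,B,k) is antitone in k >= 1.  At the end the exponent-0 condition
   w_0 = u_0 ... u_p is enforced by refining the pattern along the word w_0
   (lemma fact_lang_refine). *)

abbreviation full_pow :: "'a set \<Rightarrow> nat \<Rightarrow> 'a list set" where
  "full_pow B k \<equiv> lang_pow (full_words B) k"

lemma lang_pow_0 [simp]: "lang_pow L 0 = {[]}"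
  by (auto simp: lang_pow_def)

lemma lang_pow_1 [simp]: "lang_pow L (Suc 0) = L"
proof (intro set_eqI iffI)
  fix x assume "x \<in> lang_pow L (Suc 0)"
  then show "x \<in> L" by (auto simp: lang_pow_def length_Suc_conv)
next
  fix x assume "x \<in> L"
  then show "x \<in> lang_pow L (Suc 0)" unfolding lang_pow_def by (intro CollectI exI[of _ "[x]"]) simp
qed

lemma lang_pow_add:
  "lang_pow L (a + b) = {x @ y | x y. x \<in> lang_pow L a \<and> y \<in> lang_pow L b}"
proof (intro set_eqI iffI)
  fix z assume "z \<in> lang_pow L (a + b)"
  then obtain ws where ws: "z = concat ws" "length ws = a + b" "set ws \<subseteq> L"
    by (auto simp: lang_pow_def)
  have "z = concat (take a ws) @ concat (drop a ws)"
    using ws(1) by (metis append_take_drop_id concat_append)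
  moreover have "concat (take a ws) \<in> lang_pow L a"
    using ws unfolding lang_pow_def by (intro CollectI exI[of _ "take a ws"]) (auto dest: in_set_takeD)
  moreover have "concat (drop a ws) \<in> lang_pow L b"
    using ws unfolding lang_pow_def by (intro CollectI exI[of _ "drop a ws"]) (auto dest: in_set_dropD)
  ultimately show "z \<in> {x @ y | x y. x \<in> lang_pow L a \<and> y \<in> lang_pow L b}" by blast
next
  fix z assume "z \<in> {x @ y | x y. x \<in> lang_pow L a \<and> y \<in> lang_pow L b}"
  then obtain ws1 ws2 where "z = concat ws1 @ concat ws2" "length ws1 = a" "length ws2 = b"
    "set ws1 \<subseteq> L" "set ws2 \<subseteq> L"
    by (auto simp: lang_pow_def)
  then show "z \<in> lang_pow L (a + b)"
    unfolding lang_pow_def by (intro CollectI exI[of _ "ws1 @ ws2"]) auto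
qed

lemma full_pow_set: "z \<in> full_pow B k \<Longrightarrow> set z \<subseteq> B"
  unfolding lang_pow_def full_words_def by fastforce

lemma full_pow_absorb_left:
  assumes "z \<in> full_pow B (Suc k)" and "set \<alpha> \<subseteq> B"
  shows "\<alpha> @ z \<in> full_pow B (Suc k)"
proof -
  have "z \<in> full_pow B (1 + k)" using assms(1) by simp
  then obtain g y where "z = g @ y" "g \<in> full_words B" "y \<in> full_pow B k"
    unfolding lang_pow_add by auto
  moreover have "\<alpha> @ g \<in> full_words B"
    using assms(2) \<open>g \<in> full_words B\<close> by (auto simp: full_words_def)
  ultimately have "\<alpha> @ z = (\<alpha> @ g) @ y \<and> \<alpha> @ g \<in> full_pow B 1 \<and> y \<in> full_pow B k"
    by simp
  then have "\<alpha> @ z \<in> full_pow B (1 + k)" unfolding lang_pow_add by blast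
  then show ?thesis by simp
qed

lemma full_pow_absorb_right:
  assumes "z \<in> full_pow B (Suc k)" and "set \<alpha> \<subseteq> B"
  shows "z @ \<alpha> \<in> full_pow B (Suc k)"
proof -
  have "z \<in> full_pow B (k + 1)" using assms(1) by simp
  then obtain y g where "z = y @ g" "y \<in> full_pow B k" "g \<in> full_words B"
    unfolding lang_pow_add by auto
  moreover have "g @ \<alpha> \<in> full_words B"
    using assms(2) \<open>g \<in> full_words B\<close> by (auto simp: full_words_def)
  ultimately have "z @ \<alpha> = y @ (g @ \<alpha>) \<and> y \<in> full_pow B k \<and> g @ \<alpha> \<in> full_pow B 1"
    by simp
  then have "z @ \<alpha> \<in> full_pow B (k + 1)" unfolding lang_pow_add by blast
  then show ?thesis by simp
qed

lemma full_pow_antimono: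
  assumes "z \<in> full_pow B k" and "1 \<le> n" and "n \<le> k"
  shows "z \<in> full_pow B n"
proof -
  have "z \<in> full_pow B (n + (k - n))" using assms by simp
  then obtain z1 z2 where "z = z1 @ z2" "z1 \<in> full_pow B n" "z2 \<in> full_pow B (k - n)"
    unfolding lang_pow_add by auto
  moreover obtain n' where "n = Suc n'" using assms(2) by (cases n) auto
  ultimately show ?thesis using full_pow_absorb_right full_pow_set by metis
qed

lemma fact_pattern_length: "fact_pattern A us Bs \<Longrightarrow> length us = length Bs + 1"
  by (simp add: fact_pattern_def)

lemma fact_pattern_Nil: "fact_pattern A us [] \<longleftrightarrow> (\<exists>u. us = [u] \<and> set u \<subseteq> A)"
  unfolding fact_pattern_def by (cases us) fastforce+

lemma fact_pattern_Cons:
  "fact_pattern A (u # us) (B # Bs) \<longleftrightarrow> set u \<subseteq> A \<and> B \<noteq> {} \<and> B \<subseteq> A \<and> fact_pattern A us Bs"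
  unfolding fact_pattern_def by (auto simp: conj_ac)

lemma fact_lang_0: "length us = length Bs + 1 \<Longrightarrow> fact_lang us Bs 0 = {concat us}"
proof (induction Bs arbitrary: us)
  case Nil then show ?case by (cases us) auto
next
  case (Cons B Bs) then show ?case by (cases us) auto
qed

lemma fact_lang_antimono:
  assumes "1 \<le> n" and "n \<le> k"
  shows "fact_lang us Bs k \<subseteq> fact_lang us Bs n"
  using assms(2)
proof (induction us Bs k rule: fact_lang.induct)
  case (2 u us B Bs k)
  have "full_pow B k \<subseteq> full_pow B n" using full_pow_antimono assms(1) 2 by blast
  then show ?case using 2 by fastforce
qed auto

definition join :: "'a list list \<Rightarrow> 'a list list \<Rightarrow> 'a list list" where
  "join us1 us2 = butlast us1 @ [last us1 @ hd us2] @ tl us2"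

lemma concat_join:
  assumes "us1 \<noteq> []" and "us2 \<noteq> []"
  shows "concat (join us1 us2) = concat us1 @ concat us2"
proof -
  have "concat us1 @ concat us2 = concat (butlast us1 @ [last us1]) @ concat (hd us2 # tl us2)"
    using assms by simp
  then show ?thesis by (simp add: join_def)
qed

lemma fact_pattern_join:
  assumes "fact_pattern A us1 Bs1" and "fact_pattern A us2 Bs2"
  shows "fact_pattern A (join us1 us2) (Bs1 @ Bs2)"
proof -
  have ne: "us1 \<noteq> []" "us2 \<noteq> []" using assms by (auto simp: fact_pattern_def)
  have "set (join us1 us2) \<subseteq> set us1 \<union> set us2 \<union> {last us1 @ hd us2}"
    using ne by (auto simp: join_def dest: in_set_butlastD list.set_sel(2))
  moreover have "set (last us1 @ hd us2) \<subseteq> A"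
    using assms ne by (simp add: fact_pattern_def)
  ultimately have "\<forall>u\<in>set (join us1 us2). set u \<subseteq> A"
    using assms unfolding fact_pattern_def by blast
  moreover have "length (join us1 us2) = length (Bs1 @ Bs2) + 1"
    using assms ne by (simp add: fact_pattern_def join_def)
  ultimately show ?thesis using assms by (auto simp: fact_pattern_def)
qed

lemma fact_lang_join:
  assumes "x \<in> fact_lang us1 Bs1 n" and "y \<in> fact_lang us2 Bs2 n"
    and "length us1 = length Bs1 + 1" and "length us2 = length Bs2 + 1"
  shows "x @ y \<in> fact_lang (join us1 us2) (Bs1 @ Bs2) n"
  using assms
proof (induction Bs1 arbitrary: us1 x)
  case Nil
  then obtain u where u: "us1 = [u]" "x = u" by (cases us1) auto
  obtain v us2' where v: "us2 = v # us2'" using Nil by (cases us2) auto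
  show ?case using Nil.prems u v by (cases Bs2) (auto simp: join_def)
next
  case (Cons B Bs1)
  then obtain u us1' where u: "us1 = u # us1'" by (cases us1) auto
  then have "us1' \<noteq> []" using Cons.prems(3) by auto
  from Cons.prems u obtain g t where gt: "x = u @ g @ t" "g \<in> full_pow B n" "t \<in> fact_lang us1' Bs1 n"
    by auto
  have "t @ y \<in> fact_lang (join us1' us2) (Bs1 @ Bs2) n"
    using Cons.IH[OF gt(3) Cons.prems(2)] Cons.prems u by auto
  moreover have "join us1 us2 = u # join us1' us2" using u \<open>us1' \<noteq> []\<close> by (simp add: join_def)
  ultimately show ?case using gt by auto
qed

(* trail [a1,...,al] = [[a1],...,[al],[]]; the pattern u (B) a1 (B) ... al (B) []
   is u # trail y with l+1 copies of B. *)
definition trail :: "'a list \<Rightarrow> 'a list list" where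
  "trail y = map (\<lambda>a. [a]) y @ [[]]"

lemma trail_Nil [simp]: "trail [] = [[]]"
  by (simp add: trail_def)

lemma trail_Cons [simp]: "trail (a # y) = [a] # trail y"
  by (simp add: trail_def)

lemma concat_trail [simp]: "concat (trail y) = y"
  by (induction y) auto

lemma fact_pattern_trail:
  assumes "set u \<subseteq> A" and "B \<noteq> {}" and "B \<subseteq> A" and "set y \<subseteq> B"
  shows "fact_pattern A (u # trail y) (replicate (Suc (length y)) B)"
  using assms
proof (induction y arbitrary: u)
  case Nil then show ?case by (simp add: fact_pattern_Cons fact_pattern_Nil)
next
  case (Cons a y) then show ?case by (auto simp: fact_pattern_Cons)
qed

lemma full_pow_split_letter:
  assumes "z \<in> full_pow B (n + 1 + m)" and "a \<in> B" and "1 \<le> n" and "1 \<le> m"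
  shows "\<exists>z1 z2. z = z1 @ a # z2 \<and> z1 \<in> full_pow B n \<and> z2 \<in> full_pow B m"
proof -
  obtain z1 r where z1: "z1 \<in> full_pow B n" and r: "r \<in> full_pow B (1 + m)" and "z = z1 @ r"
    using assms(1) unfolding add.assoc lang_pow_add by blast
  moreover obtain g z2 where "r = g @ z2" and g: "g \<in> full_words B" and z2: "z2 \<in> full_pow B m"
    using r unfolding lang_pow_add by auto
  moreover have "a \<in> set g" using g assms(2) by (auto simp: full_words_def)
  then obtain \<alpha> \<beta> where g_split: "g = \<alpha> @ a # \<beta>" by (meson split_list)
  ultimately have z: "z = (z1 @ \<alpha>) @ a # (\<beta> @ z2)" by simp
  have "set \<alpha> \<subseteq> B" "set \<beta> \<subseteq> B" using g g_split by (auto simp: full_words_def)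
  moreover obtain n' m' where "n = Suc n'" "m = Suc m'" using assms(3,4) by (cases n; cases m) auto
  ultimately have "z1 @ \<alpha> \<in> full_pow B n" "\<beta> @ z2 \<in> full_pow B m"
    using full_pow_absorb_right[of z1 B n'] full_pow_absorb_left[of z2 B m'] z1 z2 by simp_all
  then show ?thesis using z by blast
qed

lemma full_pow_refine:
  assumes "z \<in> full_pow B k" and "1 \<le> n" and "set y \<subseteq> B" and "(length y + 1) * (n + 1) \<le> k"
  shows "u @ z \<in> fact_lang (u # trail y) (replicate (Suc (length y)) B) n"
  using assms
proof (induction y arbitrary: u z k)
  case Nil
  then have "z \<in> full_pow B n" using full_pow_antimono[of z B k n] by simp
  then show ?case by auto
next
  case (Cons a y)
  have k_ge: "(n + 1) + (length y + 1) * (n + 1) \<le> k"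
    using Cons.prems(4) by (simp add: algebra_simps)
  moreover have "1 \<le> (length y + 1) * (n + 1)" by simp
  ultimately have k': "(length y + 1) * (n + 1) \<le> k - n - 1" and "1 \<le> k - n - 1" by arith+
  have "z \<in> full_pow B (n + 1 + (k - n - 1))" using Cons.prems(1) k_ge by simp
  then obtain z1 z2 where z: "z = z1 @ a # z2" and z1: "z1 \<in> full_pow B n"
    and z2: "z2 \<in> full_pow B (k - n - 1)"
    using full_pow_split_letter Cons.prems(2,3) \<open>1 \<le> k - n - 1\<close> by (metis list.set_intros(1) subsetD)
  have "[a] @ z2 \<in> fact_lang ([a] # trail y) (replicate (Suc (length y)) B) n"
    using Cons.IH[OF z2 Cons.prems(2) _ k'] Cons.prems(3) by simp
  then have "u @ z1 @ ([a] @ z2) \<in> fact_lang (u # [a] # trail y) (B # replicate (Suc (length y)) B) n"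
    unfolding fact_lang.simps(2) using z1 by blast
  then show ?case using z by simp
qed

(* Each block word of s is split into its letters by full_pow_refine. *)
lemma fact_lang_refine:
  assumes "fact_pattern A us Bs" and "s \<in> fact_lang us Bs m"
  shows "\<exists>us' Bs' c. fact_pattern A us' Bs' \<and> concat us' = s \<and>
           (\<forall>n k. 1 \<le> n \<longrightarrow> c * n \<le> k \<longrightarrow> fact_lang us Bs k \<subseteq> fact_lang us' Bs' n)"
  using assms
proof (induction Bs arbitrary: us s)
  case Nil
  then obtain u where "us = [u]" by (auto simp: fact_pattern_Nil)
  with Nil show ?case by (intro exI[of _ "[u]"] exI[of _ "[]"] exI[of _ 0]) auto
next
  case (Cons B Bs)
  obtain u us1 where us: "us = u # us1"
    using Cons.prems(1) by (cases us) (auto simp: fact_pattern_def)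
  have pu: "set u \<subseteq> A" "B \<noteq> {}" "B \<subseteq> A" and p1: "fact_pattern A us1 Bs"
    using Cons.prems(1) us by (simp_all add: fact_pattern_Cons)
  obtain y s1 where s: "s = u @ y @ s1" and y: "y \<in> full_pow B m"
    and s1: "s1 \<in> fact_lang us1 Bs m"
    using Cons.prems(2) us by auto
  obtain us' Bs' c where p': "fact_pattern A us' Bs'" and c': "concat us' = s1"
    and incl: "\<forall>n k. 1 \<le> n \<longrightarrow> c * n \<le> k \<longrightarrow> fact_lang us1 Bs k \<subseteq> fact_lang us' Bs' n"
    using Cons.IH[OF p1 s1] by blast
  have sy: "set y \<subseteq> B" using full_pow_set y .
  define hs where "hs = replicate (Suc (length y)) B"
  have ph: "fact_pattern A (u # trail y) hs"
    unfolding hs_def using fact_pattern_trail pu sy .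
  have pat: "fact_pattern A (join (u # trail y) us') (hs @ Bs')"
    using fact_pattern_join[OF ph p'] .
  have "us' \<noteq> []" using fact_pattern_length[OF p'] by auto
  then have cat: "concat (join (u # trail y) us') = s"
    using concat_join[of "u # trail y" us'] s c' by simp
  define c'' where "c'' = max c (2 * (length y + 1))"
  have "fact_lang us (B # Bs) k \<subseteq> fact_lang (join (u # trail y) us') (hs @ Bs') n"
    if n: "1 \<le> n" and k: "c'' * n \<le> k" for n k
  proof
    fix x assume "x \<in> fact_lang us (B # Bs) k"
    then obtain z t where x: "x = u @ z @ t" and z: "z \<in> full_pow B k"
      and t: "t \<in> fact_lang us1 Bs k"
      using us by auto
    have "(length y + 1) * (n + 1) \<le> (length y + 1) * (2 * n)"
      using n by (intro mult_le_mono2) simp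
    also have "\<dots> = 2 * (length y + 1) * n" by simp
    also have "\<dots> \<le> k" using k unfolding c''_def by (meson le_trans max.cobounded2 mult_le_mono1)
    finally have "u @ z \<in> fact_lang (u # trail y) hs n"
      unfolding hs_def using full_pow_refine z n sy by blast
    moreover have "t \<in> fact_lang us' Bs' n"
      using incl t n k unfolding c''_def by (meson le_trans max.cobounded1 mult_le_mono1 subsetD)
    ultimately show "x \<in> fact_lang (join (u # trail y) us') (hs @ Bs') n"
      using fact_lang_join fact_pattern_length[OF ph] fact_pattern_length[OF p'] x by fastforce
  qed
  then show ?case using pat cat by blast
qed

(* Adequacy with exponents shifted by one; unlike adequacy itself it passes to
   subsequences. *)
definition adequate_pos :: "'a list list \<Rightarrow> 'a set list \<Rightarrow> (nat \<Rightarrow> 'a list) \<Rightarrow> bool" where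
  "adequate_pos us Bs v \<longleftrightarrow> (\<forall>n. v n \<in> fact_lang us Bs (Suc n))"

definition pattern_subseq :: "'a set \<Rightarrow> (nat \<Rightarrow> 'a list) \<Rightarrow> bool" where
  "pattern_subseq A w \<longleftrightarrow>
     (\<exists>\<phi> us Bs. strict_mono \<phi> \<and> fact_pattern A us Bs \<and> adequate_pos us Bs (w \<circ> \<phi>))"

lemma adequate_pos_subseq:
  assumes "strict_mono \<sigma>" and "adequate_pos us Bs v"
  shows "adequate_pos us Bs (v \<circ> \<sigma>)"
  unfolding adequate_pos_def
proof
  fix n
  have "Suc n \<le> Suc (\<sigma> n)" using strict_mono_imp_increasing[OF assms(1)] by simp
  then show "(v \<circ> \<sigma>) n \<in> fact_lang us Bs (Suc n)"
    using fact_lang_antimono[of "Suc n" "Suc (\<sigma> n)"] assms(2) by (auto simp: adequate_pos_def)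
qed

lemma pattern_subseq_from_subseq:
  assumes "strict_mono \<sigma>" and "pattern_subseq A (w \<circ> \<sigma>)"
  shows "pattern_subseq A w"
proof -
  obtain \<phi> us Bs where "strict_mono \<phi>" "fact_pattern A us Bs" "adequate_pos us Bs (w \<circ> \<sigma> \<circ> \<phi>)"
    using assms(2) unfolding pattern_subseq_def by blast
  moreover have "strict_mono (\<sigma> \<circ> \<phi>)"
    using assms(1) \<open>strict_mono \<phi>\<close> by (simp add: strict_mono_def)
  ultimately show ?thesis unfolding pattern_subseq_def comp_assoc by blast
qed

(* From shift-adequacy to adequacy: refine the pattern along the first term and take
   the subsequence of indices c n, so that the exponent-0 condition holds as well. *)
lemma pattern_subseq_adequate:
  assumes "pattern_subseq A w"
  shows "\<exists>\<phi> us Bs. strict_mono \<phi> \<and> fact_pattern A us Bs \<and> adequate us Bs (w \<circ> \<phi>)"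
proof -
  obtain \<phi> us Bs where \<phi>: "strict_mono \<phi>" and p: "fact_pattern A us Bs"
    and ad: "adequate_pos us Bs (w \<circ> \<phi>)"
    using assms unfolding pattern_subseq_def by blast
  obtain us' Bs' c where p': "fact_pattern A us' Bs'" and cat: "concat us' = w (\<phi> 0)"
    and incl: "\<forall>n k. 1 \<le> n \<longrightarrow> c * n \<le> k \<longrightarrow> fact_lang us Bs k \<subseteq> fact_lang us' Bs' n"
    using fact_lang_refine[OF p, of "w (\<phi> 0)" 1] ad by (auto simp: adequate_pos_def)
  define \<psi> :: "nat \<Rightarrow> nat" where "\<psi> n = Suc c * n" for n
  have "strict_mono \<psi>" unfolding \<psi>_def strict_mono_def by (auto intro: add_less_le_mono)
  have "w (\<phi> (\<psi> n)) \<in> fact_lang us' Bs' n" for n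
  proof (cases "n = 0")
    case True
    then show ?thesis using cat fact_lang_0[OF fact_pattern_length[OF p']] by (simp add: \<psi>_def)
  next
    case False
    have "w (\<phi> (\<psi> n)) \<in> fact_lang us Bs (Suc (\<psi> n))" using ad by (simp add: adequate_pos_def)
    moreover have "c * n \<le> Suc (\<psi> n)" by (simp add: \<psi>_def)
    ultimately show ?thesis using incl False by (meson less_one not_le subsetD)
  qed
  then have "adequate us' Bs' (w \<circ> (\<phi> \<circ> \<psi>))" unfolding adequate_def by simp
  moreover have "strict_mono (\<phi> \<circ> \<psi>)"
    using \<phi> \<open>strict_mono \<psi>\<close> by (simp add: strict_mono_def)
  ultimately show ?thesis using p' by blast
qed

lemma constant_subseq:
  assumes "finite F" and "\<And>k. f k \<in> F"
  obtains D and \<tau> :: "nat \<Rightarrow> nat" where "strict_mono \<tau>" and "\<And>k. f (\<tau> k) = D"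
proof -
  have "range f \<subseteq> F" using assms(2) by auto
  then have "finite (range f)" using assms(1) by (rule finite_subset)
  then obtain D where "infinite (f -` {D})"
    using inf_img_fin_dom[OF _ infinite_UNIV_nat] by blast
  then obtain \<tau> :: "nat \<Rightarrow> nat" where \<tau>: "strict_mono \<tau>" "\<And>k. \<tau> k \<in> f -` {D}"
    using infinite_enumerate by blast
  show thesis
  proof (rule that[OF \<tau>(1)])
    show "f (\<tau> k) = D" for k using \<tau>(2)[of k] by simp
  qed
qed

lemma diagonal_subseq:
  assumes "\<And>k. infinite {n. P k n}"
  obtains \<sigma> :: "nat \<Rightarrow> nat" where "strict_mono \<sigma>" and "\<And>k. P k (\<sigma> k)"
proof -
  have unbounded: "\<exists>n>m. P k n" for k m
    using assms[of k] by (simp add: infinite_nat_iff_unbounded)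
  have "\<exists>\<sigma>. \<forall>k. P k (\<sigma> k) \<and> \<sigma> k < \<sigma> (Suc k)"
    by (rule dependent_nat_choice) (use unbounded in blast)+
  then obtain \<sigma> where "\<And>k. P k (\<sigma> k)" "\<And>k. \<sigma> k < \<sigma> (Suc k)" by blast
  then show thesis using that strict_mono_Suc_iff by blast
qed

lemma pattern_subseq_concat:
  assumes x: "pattern_subseq A x"
    and y: "\<And>\<sigma>. strict_mono \<sigma> \<Longrightarrow> pattern_subseq A (y \<circ> \<sigma>)"
    and u: "set u \<subseteq> A"
  shows "pattern_subseq A (\<lambda>n. x n @ u @ y n)"
proof -
  obtain \<phi>1 us1 Bs1 where \<phi>1: "strict_mono \<phi>1" and p1: "fact_pattern A us1 Bs1"
    and a1: "adequate_pos us1 Bs1 (x \<circ> \<phi>1)"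
    using x unfolding pattern_subseq_def by blast
  obtain \<phi>2 us2 Bs2 where \<phi>2: "strict_mono \<phi>2" and p2: "fact_pattern A us2 Bs2"
    and a2: "adequate_pos us2 Bs2 (y \<circ> \<phi>1 \<circ> \<phi>2)"
    using y[OF \<phi>1] unfolding pattern_subseq_def by blast
  have a1': "adequate_pos us1 Bs1 (x \<circ> \<phi>1 \<circ> \<phi>2)"
    using adequate_pos_subseq[OF \<phi>2 a1] .
  have pu: "fact_pattern A [u] []" using u by (simp add: fact_pattern_Nil)
  have p1u: "fact_pattern A (join us1 [u]) Bs1"
    using fact_pattern_join[OF p1 pu] by simp
  have "adequate_pos (join (join us1 [u]) us2) (Bs1 @ Bs2) (\<lambda>n. x (\<phi>1 (\<phi>2 n)) @ u @ y (\<phi>1 (\<phi>2 n)))"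
    unfolding adequate_pos_def
  proof
    fix n
    have "x (\<phi>1 (\<phi>2 n)) @ u \<in> fact_lang (join us1 [u]) Bs1 (Suc n)"
      using fact_lang_join[of _ us1 Bs1 _ u "[u]" "[]"] a1' fact_pattern_length[OF p1]
      by (simp add: adequate_pos_def)
    then show "x (\<phi>1 (\<phi>2 n)) @ u @ y (\<phi>1 (\<phi>2 n)) \<in> fact_lang (join (join us1 [u]) us2) (Bs1 @ Bs2) (Suc n)"
      using fact_lang_join fact_pattern_length[OF p1u] fact_pattern_length[OF p2] a2
      by (fastforce simp: adequate_pos_def)
  qed
  moreover have "strict_mono (\<phi>1 \<circ> \<phi>2)" using \<phi>1 \<phi>2 by (simp add: strict_mono_def)
  ultimately show ?thesis
    using fact_pattern_join[OF p1u p2] unfolding pattern_subseq_def comp_def by blast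
qed

lemma shortest_full_prefix:
  assumes "C \<subseteq> set w" and "C \<noteq> {}"
  shows "\<exists>p c r. w = p @ c # r \<and> c \<in> C \<and> c \<notin> set p \<and> C \<subseteq> insert c (set p)"
  using assms
proof (induction w rule: rev_induct)
  case (snoc a w)
  show ?case
  proof (cases "C \<subseteq> set w")
    case True
    then obtain p c r where "w = p @ c # r" "c \<in> C" "c \<notin> set p" "C \<subseteq> insert c (set p)"
      using snoc by blast
    then show ?thesis by (intro exI[of _ p] exI[of _ c] exI[of _ "r @ [a]"]) simp
  next
    case False
    then show ?thesis using snoc.prems by (intro exI[of _ w] exI[of _ a] exI[of _ "[]"]) auto
  qed
qed simp

lemma split_after_full_prefix:
  assumes "set x \<subseteq> C" and "C \<subseteq> set x" and "C \<noteq> {}"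
    and "x \<notin> full_pow C (Suc (Suc k))"
  shows "\<exists>p c r. x = p @ c # r \<and> c \<in> C \<and> set p \<subseteq> C - {c} \<and> set r \<subseteq> C \<and>
           r \<notin> full_pow C (Suc k)"
proof -
  obtain p c r where x: "x = p @ c # r" and c: "c \<in> C" and "c \<notin> set p"
    and "C \<subseteq> insert c (set p)"
    using shortest_full_prefix[OF assms(2,3)] by blast
  then have "p @ [c] \<in> full_pow C 1" using assms(1) by (auto simp: full_words_def)
  then have "r \<notin> full_pow C (Suc k)"
    using assms(4) x lang_pow_add[of "full_words C" 1 "Suc k"] by auto
  moreover have "set p \<subseteq> C - {c}" "set r \<subseteq> C"
    using assms(1) x \<open>c \<notin> set p\<close> by auto
  ultimately show ?thesis using x c by blast
qed

lemma missing_letter_case: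
  assumes "finite C"
    and smaller: "\<forall>D\<subset>C. \<forall>v. (\<forall>n. set (v n) \<subseteq> D) \<longrightarrow> pattern_subseq A v"
    and over: "\<And>n. set (v n) \<subseteq> C" and missing: "\<And>n. \<not> C \<subseteq> set (v n)"
  shows "pattern_subseq A v"
proof -
  obtain D and \<tau> :: "nat \<Rightarrow> nat" where \<tau>: "strict_mono \<tau>" and D: "\<And>k. set (v (\<tau> k)) = D"
    by (rule constant_subseq[of "Pow C" "\<lambda>n. set (v n)"]) (use \<open>finite C\<close> over in auto)
  have "D \<subset> C" using D[of 0] over[of "\<tau> 0"] missing[of "\<tau> 0"] by blast
  then have "pattern_subseq A (v \<circ> \<tau>)" using smaller D by auto
  then show ?thesis using pattern_subseq_from_subseq[OF \<tau>] by blast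
qed

lemma full_prefix_case:
  assumes "finite C" and "C \<subseteq> A" and "C \<noteq> {}"
    and smaller: "\<forall>D\<subset>C. \<forall>v. (\<forall>n. set (v n) \<subseteq> D) \<longrightarrow> pattern_subseq A v"
    and rest: "\<And>v. (\<And>n. set (v n) \<subseteq> C) \<Longrightarrow> (\<And>n. v n \<notin> full_pow C (Suc k)) \<Longrightarrow> pattern_subseq A v"
    and over: "\<And>n. set (v n) \<subseteq> C" and full: "\<And>n. C \<subseteq> set (v n)"
    and bounded: "\<And>n. v n \<notin> full_pow C (Suc (Suc k))"
  shows "pattern_subseq A v"
proof -
  have "\<forall>n. \<exists>p c r. v n = p @ c # r \<and> c \<in> C \<and> set p \<subseteq> C - {c} \<and> set r \<subseteq> C \<and>
          r \<notin> full_pow C (Suc k)"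
    using split_after_full_prefix[OF over full \<open>C \<noteq> {}\<close> bounded] by blast
  then obtain P c R where "\<forall>n. v n = P n @ c n # R n \<and> c n \<in> C \<and> set (P n) \<subseteq> C - {c n} \<and>
      set (R n) \<subseteq> C \<and> R n \<notin> full_pow C (Suc k)"
    by metis
  then have split: "\<And>n. v n = P n @ c n # R n" and c: "\<And>n. c n \<in> C"
    and P: "\<And>n. set (P n) \<subseteq> C - {c n}"
    and R: "\<And>n. set (R n) \<subseteq> C" "\<And>n. R n \<notin> full_pow C (Suc k)"
    by blast+
  obtain c0 and \<tau> :: "nat \<Rightarrow> nat" where \<tau>: "strict_mono \<tau>" and c0: "\<And>n. c (\<tau> n) = c0"
    by (rule constant_subseq[of C c]) (use \<open>finite C\<close> c in auto)
  have "C - {c0} \<subset> C" using c[of "\<tau> 0"] c0[of 0] by blast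
  moreover have "set ((P \<circ> \<tau>) n) \<subseteq> C - {c0}" for n using P[of "\<tau> n"] c0[of n] by simp
  ultimately have "pattern_subseq A (P \<circ> \<tau>)" using smaller by blast
  moreover have "pattern_subseq A (R \<circ> \<tau> \<circ> \<sigma>)" for \<sigma> using rest R by simp
  moreover have "set [c0] \<subseteq> A" using c[of "\<tau> 0"] c0[of 0] \<open>C \<subseteq> A\<close> by auto
  ultimately have "pattern_subseq A (\<lambda>n. (P \<circ> \<tau>) n @ [c0] @ (R \<circ> \<tau>) n)"
    by (intro pattern_subseq_concat)
  moreover have "(\<lambda>n. (P \<circ> \<tau>) n @ [c0] @ (R \<circ> \<tau>) n) = v \<circ> \<tau>"
    using split c0 by (simp add: fun_eq_iff)
  ultimately show ?thesis using pattern_subseq_from_subseq[OF \<tau>] by simp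
qed

lemma bounded_power_case:
  assumes "finite C" and "C \<subseteq> A" and "C \<noteq> {}"
    and smaller: "\<forall>D\<subset>C. \<forall>v. (\<forall>n. set (v n) \<subseteq> D) \<longrightarrow> pattern_subseq A v"
  shows "(\<And>n. set (v n) \<subseteq> C) \<Longrightarrow> (\<And>n. v n \<notin> full_pow C (Suc k)) \<Longrightarrow> pattern_subseq A v"
proof (induction k arbitrary: v)
  case 0
  have "\<not> C \<subseteq> set (v n)" for n using 0 by (auto simp: full_words_def)
  then show ?case using missing_letter_case[OF \<open>finite C\<close> smaller] 0 by blast
next
  case (Suc k)
  obtain b and \<tau> :: "nat \<Rightarrow> nat" where \<tau>: "strict_mono \<tau>" and b: "\<And>n. (C \<subseteq> set (v (\<tau> n))) = b"
    by (rule constant_subseq[of UNIV "\<lambda>n. C \<subseteq> set (v n)"]) auto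
  have over: "\<And>n. set ((v \<circ> \<tau>) n) \<subseteq> C" and bounded: "\<And>n. (v \<circ> \<tau>) n \<notin> full_pow C (Suc (Suc k))"
    using Suc.prems by simp_all
  have "pattern_subseq A (v \<circ> \<tau>)"
  proof (cases b)
    case True
    show ?thesis
      by (rule full_prefix_case[OF assms Suc.IH]) (use over bounded b True in auto)
  next
    case False
    show ?thesis
      by (rule missing_letter_case[OF \<open>finite C\<close> smaller]) (use over b False in auto)
  qed
  then show ?case using pattern_subseq_from_subseq[OF \<tau>] by blast
qed

lemma pattern_subseq_over_alphabet:
  assumes "finite C" and "C \<subseteq> A" and "\<And>n. set (w n) \<subseteq> C"
  shows "pattern_subseq A w"
  using assms
proof (induction C arbitrary: w rule: finite_psubset_induct)
  case (psubset C)
  have smaller: "\<forall>D\<subset>C. \<forall>v. (\<forall>n. set (v n) \<subseteq> D) \<longrightarrow> pattern_subseq A v"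
    using psubset.IH psubset.prems(1) by blast
  show ?case
  proof (cases "C = {}")
    case True
    then have "adequate_pos [[]] [] (w \<circ> id)" using psubset.prems(2) by (simp add: adequate_pos_def)
    moreover have "fact_pattern A [[]] []" by (simp add: fact_pattern_Nil)
    moreover have "strict_mono (id :: nat \<Rightarrow> nat)" by (simp add: strict_mono_def)
    ultimately show ?thesis unfolding pattern_subseq_def by blast
  next
    case nonempty: False
    show ?thesis
    proof (cases "\<forall>k. infinite {n. w n \<in> full_pow C (Suc k)}")
      case True
      obtain \<sigma> :: "nat \<Rightarrow> nat" where \<sigma>: "strict_mono \<sigma>" and "\<And>k. w (\<sigma> k) \<in> full_pow C (Suc k)"
        by (rule diagonal_subseq[of "\<lambda>k n. w n \<in> full_pow C (Suc k)"]) (use True in auto)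
      then have "adequate_pos [[], []] [C] (w \<circ> \<sigma>)" by (simp add: adequate_pos_def)
      moreover have "fact_pattern A [[], []] [C]"
        using nonempty psubset.prems(1) by (simp add: fact_pattern_Cons fact_pattern_Nil)
      ultimately show ?thesis unfolding pattern_subseq_def using \<sigma> by blast
    next
      case False
      then obtain k where "finite {n. w n \<in> full_pow C (Suc k)}" by blast
      then have "infinite (UNIV - {n. w n \<in> full_pow C (Suc k)})"
        by (rule Diff_infinite_finite) (rule infinite_UNIV_nat)
      then obtain \<sigma> :: "nat \<Rightarrow> nat" where \<sigma>: "strict_mono \<sigma>"
        and "\<forall>n. \<sigma> n \<in> UNIV - {n. w n \<in> full_pow C (Suc k)}"
        using infinite_enumerate by blast
      then have "pattern_subseq A (w \<circ> \<sigma>)"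
        by (intro bounded_power_case[OF psubset.hyps psubset.prems(1) nonempty smaller])
          (use psubset.prems(2) in auto)
      then show ?thesis using pattern_subseq_from_subseq[OF \<sigma>] by blast
    qed
  qed
qed

theorem lemma3p1:
  fixes A :: "'a set" and w :: "nat \<Rightarrow> 'a list"
  assumes "finite A" and "\<And>n. set (w n) \<subseteq> A"
  shows "\<exists>\<phi> us Bs. strict_mono \<phi> \<and> fact_pattern A us Bs \<and> adequate us Bs (w \<circ> \<phi>)"
proof -
  have "pattern_subseq A w"
    using pattern_subseq_over_alphabet[OF assms(1) order_refl] assms(2) by blast
  then show ?thesis by (rule pattern_subseq_adequate)
qed

end
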